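(* Let $\lambda_0,\lambda_1,c_1\ge0$. For $E\in\mathbb{R}$ let $$A_1(E)=\begin{bmatrix}E&-1\\1&0\end{bmatrix}\begin{bmatrix}E-c_1&-1\\1&0\end{bmatrix},\quad A_2(E)=\begin{bmatrix}E&-1\\1&0\end{bmatrix}\begin{bmatrix}E-\lambda_1-c_1&-1\\1&0\end{bmatrix},$$ $$A_3(E)=\begin{bmatrix}E-\lambda_0&-1\\1&0\end{bmatrix}\begin{bmatrix}E-c_1&-1\\1&0\end{bmatrix},\quad A_4(E)=\begin{bmatrix}E-\lambda_0&-1\\1&0\end{bmatrix}\begin{bmatrix}E-\lambda_1-c_1&-1\\1&0\end{bmatrix}.$$ Then the set $\{E\in\mathbb{R}: A_i(E)\text{ is hyperbolic for every } i=1,2,3,4\}=\bigcap_{i=1}^4\{E:|\operatorname{tr}A_i(E)|>2\}$ is a union of at most $5$ intervals.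
   Context: A matrix in $SL(2,\mathbb{R})$ is hyperbolic if the absolute value of its trace is greater than $2$. *)

theory Defs
  imports "HOL-Analysis.Analysis"
begin

definition mat2 :: "real \<Rightarrow> real \<Rightarrow> real \<Rightarrow> real \<Rightarrow> real^2^2" where
  "mat2 a b c d = (\<chi> i j. if i = 1 then (if j = 1 then a else b)
                            else (if j = 1 then c else d))"

definition tmat :: "real \<Rightarrow> real^2^2" where
  "tmat x = mat2 x (-1) 1 0"

definition hyperbolic :: "real^2^2 \<Rightarrow> bool" where
  "hyperbolic M \<longleftrightarrow> \<bar>trace M\<bar> > 2"

end

theory Submission
  imports Defs
begin

text \<open>The trace of a product of two transfer matrices with entries \<open>E - a\<close> and
  \<open>E - b\<close> is \<open>(E - a)(E - b) - 2\<close>. Between \<open>a\<close> and \<open>b\<close> this product is negative, so the matrix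
  is hyperbolic there, while outside \<open>[a, b]\<close> the product grows with the distance from the
  interval. Hence each of the four hyperbolicity sets, and so their intersection, meets every
  cell of the partition of the line cut at the four points \<open>0, \<lambda>\<^sub>0, c\<^sub>1, \<lambda>\<^sub>1 + c\<^sub>1\<close> in an
  interval, and there are at most five cells.\<close>

lemma trace_tmat_mult: "trace (tmat x ** tmat y) = x * y - 2"
  unfolding trace_def tmat_def mat2_def matrix_matrix_mult_def
  by (simp add: sum_2)

lemma hyperbolic_tmat_mult_iff: "hyperbolic (tmat x ** tmat y) \<longleftrightarrow> x * y \<notin> {0..4}"
  by (auto simp: hyperbolic_def trace_tmat_mult)

text \<open>\<open>S\<close> meets each cell \<open>(t, t']\<close> of the partition of the line cut at the points of \<open>T\<close>
  in a convex set; \<open>x\<close> and \<open>z\<close> share a cell iff no point of \<open>T\<close> separates them.\<close>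

definition cellwise_convex :: "'a::linorder set \<Rightarrow> 'a set \<Rightarrow> bool" where
  "cellwise_convex T S \<longleftrightarrow>
     (\<forall>x\<in>S. \<forall>z\<in>S. \<forall>y\<in>{x..z}. (\<forall>t\<in>T. t < x \<longleftrightarrow> t < z) \<longrightarrow> y \<in> S)"

lemma cellwise_convexD:
  "cellwise_convex T S \<Longrightarrow> x \<in> S \<Longrightarrow> z \<in> S \<Longrightarrow> x \<le> y \<Longrightarrow> y \<le> z \<Longrightarrow>
    (\<And>t. t \<in> T \<Longrightarrow> t < x \<longleftrightarrow> t < z) \<Longrightarrow> y \<in> S"
  unfolding cellwise_convex_def by (meson atLeastAtMost_iff)

lemma cellwise_convex_subset:
  "cellwise_convex T S \<Longrightarrow> T \<subseteq> T' \<Longrightarrow> cellwise_convex T' S"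
  unfolding cellwise_convex_def by blast

lemma cellwise_convex_Int:
  assumes "cellwise_convex T S" and "cellwise_convex T S'"
  shows "cellwise_convex T (S \<inter> S')"
  unfolding cellwise_convex_def
proof (intro ballI impI)
  fix x z y
  assume "x \<in> S \<inter> S'" "z \<in> S \<inter> S'" "y \<in> {x..z}" and "\<forall>t\<in>T. t < x \<longleftrightarrow> t < z"
  then show "y \<in> S \<inter> S'"
    using cellwise_convexD[OF assms(1), of x z y] cellwise_convexD[OF assms(2), of x z y] by simp
qed

lemma card_image_Int_lessThan_le:
  fixes T :: "'a::linorder set"
  assumes "finite T"
  shows "card ((\<lambda>x. T \<inter> {..<x}) ` X) \<le> card T + 1"
proof -
  let ?C = "(\<lambda>x. T \<inter> {..<x}) ` X"
  have "inj_on card ?C"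
  proof (rule inj_onI)
    fix A B assume "A \<in> ?C" "B \<in> ?C" "card A = card B"
    moreover have "A \<subseteq> B \<or> B \<subseteq> A"
    proof -
      from \<open>A \<in> ?C\<close> \<open>B \<in> ?C\<close> obtain x y where "A = T \<inter> {..<x}" "B = T \<inter> {..<y}"
        by blast
      then show ?thesis
        using linear[of x y] by (metis Int_mono lessThan_subset_iff order_refl)
    qed
    moreover have "finite A" "finite B"
      using \<open>A \<in> ?C\<close> \<open>B \<in> ?C\<close> \<open>finite T\<close> by auto
    ultimately show "A = B"
      using card_subset_eq by metis
  qed
  then have "card ?C = card (card ` ?C)"
    by (simp add: card_image)
  also have "\<dots> \<le> card {0..card T}"
    using \<open>finite T\<close> by (intro card_mono) (auto intro: card_mono)
  finally show ?thesis
    by simp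
qed

lemma cellwise_convex_union_intervals:
  fixes S T :: "real set"
  assumes "finite T" and "cellwise_convex T S"
  shows "\<exists>\<I>. finite \<I> \<and> card \<I> \<le> card T + 1 \<and> (\<forall>I\<in>\<I>. is_interval I) \<and> S = \<Union>\<I>"
proof -
  define cell where "cell x = T \<inter> {..<x}" for x
  define piece where "piece C = {x\<in>S. cell x = C}" for C
  have cell_mono: "x \<le> y \<Longrightarrow> cell x \<subseteq> cell y" for x y
    unfolding cell_def by auto
  have "is_interval (piece C)" for C
    unfolding is_interval_1
  proof (intro ballI allI impI)
    fix x z y assume x: "x \<in> piece C" and z: "z \<in> piece C" and y: "x \<le> y \<and> y \<le> z"
    then have "cell x = C" "cell z = C" "x \<in> S" "z \<in> S"
      unfolding piece_def by simp_all
    then have "t < x \<longleftrightarrow> t < z" if "t \<in> T" for t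
      using that unfolding cell_def by blast
    with y have "y \<in> S"
      by (intro cellwise_convexD[OF assms(2) \<open>x \<in> S\<close> \<open>z \<in> S\<close>]) simp_all
    moreover have "cell y = C"
      using cell_mono[of x y] cell_mono[of y z] y \<open>cell x = C\<close> \<open>cell z = C\<close>
      by (intro subset_antisym) simp_all
    ultimately show "y \<in> piece C"
      unfolding piece_def by simp
  qed
  moreover have "finite (cell ` S)"
  proof (rule finite_subset)
    show "cell ` S \<subseteq> Pow T"
      unfolding cell_def by blast
  qed (use \<open>finite T\<close> in simp)
  moreover have "card (cell ` S) \<le> card T + 1"
    unfolding cell_def using \<open>finite T\<close> by (rule card_image_Int_lessThan_le)
  moreover have "S = \<Union> (piece ` cell ` S)"
    unfolding piece_def by auto
  moreover have "card (piece ` cell ` S) \<le> card (cell ` S)"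
    using \<open>finite (cell ` S)\<close> by (rule card_image_le)
  ultimately show ?thesis
    by (intro exI[of _ "piece ` cell ` S"] conjI) auto
qed

lemma mult_diff_mono_right:
  fixes a b x y :: "'a::linordered_idom"
  assumes "a \<le> x" "b \<le> x" "x \<le> y"
  shows "(x - a) * (x - b) \<le> (y - a) * (y - b)"
  using assms by (intro mult_mono) auto

lemma mult_diff_mono_left:
  fixes a b x y :: "'a::linordered_idom"
  assumes "x \<le> a" "x \<le> b" "y \<le> x"
  shows "(x - a) * (x - b) \<le> (y - a) * (y - b)"
  using mult_diff_mono_right[of "-a" "-x" "-b" "-y"] assms by (simp add: algebra_simps)

lemma cellwise_convex_mult_diff_notin:
  fixes a b c :: real
  assumes "0 \<le> c"
  shows "cellwise_convex {a, b} {E. (E - a) * (E - b) \<notin> {0..c}}"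
  unfolding cellwise_convex_def
proof (intro ballI impI)
  fix x z y
  define p where "p E = (E - a) * (E - b)" for E
  assume "x \<in> {E. (E - a) * (E - b) \<notin> {0..c}}" and "z \<in> {E. (E - a) * (E - b) \<notin> {0..c}}"
    and "y \<in> {x..z}" and cell: "\<forall>t\<in>{a, b}. t < x \<longleftrightarrow> t < z"
  then have px: "p x \<notin> {0..c}" and pz: "p z \<notin> {0..c}" and "x \<le> y" "y \<le> z"
    unfolding p_def by simp_all
  from cell have cell_a: "a < x \<longleftrightarrow> a < z" and cell_b: "b < x \<longleftrightarrow> b < z"
    by simp_all
  have "p y \<notin> {0..c}"
  proof
    assume py: "p y \<in> {0..c}"
    then have "(y \<le> a \<and> y \<le> b) \<or> (a \<le> y \<and> b \<le> y)"
      unfolding p_def by (auto simp: zero_le_mult_iff)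
    then show False
    proof
      assume "y \<le> a \<and> y \<le> b"
      with \<open>x \<le> y\<close> cell_a cell_b have "z \<le> a" "z \<le> b"
        by (simp_all add: not_less[symmetric])
      with \<open>y \<le> z\<close> have "0 \<le> p z" "p z \<le> p y"
        unfolding p_def by (simp_all add: zero_le_mult_iff mult_diff_mono_left)
      with pz py show False
        by simp
    next
      assume "a \<le> y \<and> b \<le> y"
      \<comment> \<open>cells are closed on the right, so a root may sit at \<open>z\<close> but not below \<open>z\<close> without being below \<open>x\<close>\<close>
      show False
      proof (cases "y = z")
        case True
        with pz py show False
          by simp
      next
        case False
        with \<open>a \<le> y \<and> b \<le> y\<close> \<open>y \<le> z\<close> cell_a cell_b have "a < x" "b < x"
          by simp_all
        with \<open>x \<le> y\<close> have "0 \<le> p x" "p x \<le> p y"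
          unfolding p_def by (simp_all add: zero_le_mult_iff mult_diff_mono_right)
        with px py show False
          by simp
      qed
    qed
  qed
  then show "y \<in> {E. (E - a) * (E - b) \<notin> {0..c}}"
    unfolding p_def by simp
qed

lemma cellwise_convex_hyperbolic_tmat:
  "cellwise_convex {a, b} {E. hyperbolic (tmat (E - a) ** tmat (E - b))}"
  using cellwise_convex_mult_diff_notin[of 4 a b] by (simp add: hyperbolic_tmat_mult_iff)

theorem proposition1:
  fixes lam0 lam1 c1 :: real
  assumes "lam0 \<ge> 0" and "lam1 \<ge> 0" and "c1 \<ge> 0"
  defines "A1 \<equiv> (\<lambda>E. tmat E ** tmat (E - c1))"
      and "A2 \<equiv> (\<lambda>E. tmat E ** tmat (E - lam1 - c1))"
      and "A3 \<equiv> (\<lambda>E. tmat (E - lam0) ** tmat (E - c1))"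
      and "A4 \<equiv> (\<lambda>E. tmat (E - lam0) ** tmat (E - lam1 - c1))"
  shows "\<exists>\<I> :: real set set. finite \<I> \<and> card \<I> \<le> 5 \<and> (\<forall>I\<in>\<I>. is_interval I) \<and>
           {E. hyperbolic (A1 E) \<and> hyperbolic (A2 E) \<and> hyperbolic (A3 E) \<and> hyperbolic (A4 E)}
             = \<Union>\<I>"
proof -
  define T where "T = {0, lam0, c1, lam1 + c1}"
  define H where "H a b = {E. hyperbolic (tmat (E - a) ** tmat (E - b))}" for a b
  have "finite T" and "card T \<le> 4"
    unfolding T_def by (auto simp: card_insert_le_m1)
  have H_cellwise: "cellwise_convex T (H a b)" if "a \<in> T" "b \<in> T" for a b
    unfolding H_def using that
    by (intro cellwise_convex_subset[OF cellwise_convex_hyperbolic_tmat]) auto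
  have "cellwise_convex T (H 0 c1 \<inter> H 0 (lam1 + c1) \<inter> H lam0 c1 \<inter> H lam0 (lam1 + c1))"
    by (intro cellwise_convex_Int H_cellwise) (auto simp: T_def)
  then obtain \<I> where "finite \<I>" "card \<I> \<le> card T + 1" "\<forall>I\<in>\<I>. is_interval I"
    and "H 0 c1 \<inter> H 0 (lam1 + c1) \<inter> H lam0 c1 \<inter> H lam0 (lam1 + c1) = \<Union>\<I>"
    using cellwise_convex_union_intervals[OF \<open>finite T\<close>] by blast
  moreover have "{E. hyperbolic (A1 E) \<and> hyperbolic (A2 E) \<and> hyperbolic (A3 E) \<and> hyperbolic (A4 E)}
      = H 0 c1 \<inter> H 0 (lam1 + c1) \<inter> H lam0 c1 \<inter> H lam0 (lam1 + c1)"
    unfolding A1_def A2_def A3_def A4_def H_def by (auto simp: diff_diff_eq)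
  ultimately show ?thesis
    using \<open>card T \<le> 4\<close> by (intro exI[of _ \<I>]) auto
qed

end
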